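(* Let $G$, $K$, $\hat G$, $T$, $S$, $H$ be as described in the context, and let $c:D\to\{0,1\}$ be a stable partial coloring of $\hat G$, witnessed by $H_c$ and $X_c$. Let $D'\supseteq D$ with $D'\setminus D\subseteq H$, and let $c':D'\to\{0,1\}$ be an extension of $c$. Then there is a map $\tilde c:D'\to\{0,1\}$ such that: (i) $\tilde c$, as a coloring of $\hat G[D']$, is strongly maximal in $\lfloor X_c\rfloor$; (ii) $\{x\in D':\tilde c(x)\neq c'(x)\}\subseteq\lfloor X_c\rfloor$; (iii) for every $v\in X_c$, the set $\{x\in\lfloor v\rfloor:\tilde c(x)\neq c'(x)\}$ is a finite set of vertices of finite degree; and (iv) for every $v\in X_c$ such that no vertex of $D'\setminus D$ has a neighbor in $\lfloor v\rfloor$, we have $\tilde c|_{\lfloor v\rfloor}=c|_{\lfloor v\rfloor}$.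
   Context: Setting: $G$ is a countable connected graph with no alternating ray (a ray is alternating if it passes through infinitely many vertices of finite degree and infinitely many of infinite degree); $K$ is a finite graph disjoint from $G$; $\hat G$ is obtained from the disjoint union of $G$ and $K$ by adding arbitrary edges between $V(G)$ and $V(K)$. $T$ is a normal spanning tree of $G$ with root $r$ and tree order $\le$ ($u\le v$ iff $u$ lies on the root–$v$ path of $T$; normal means endpoints of every edge of $G$ are comparable). $\lfloor v\rfloor=\{u:u\ge v\}$, $\lfloor X\rfloor=\bigcup_{v\in X}\lfloor v\rfloor$; an antichain is a set of pairwise $\le$-incomparable vertices. $S$ is the set of $\le$-minimal vertices of finite degree of $G$, and $H=V(G)\setminus\lfloor S\rfloor$. For a coloring $c$ of a graph $\Gamma$: $\mathit{trans}(c)=\{uv\in E(\Gamma):c(u)\neq c(v)\}$; $c*F$ differs from $c$ exactly on $F$; for finite $F$ of vertices of finite degree, $\mathit{dtrans}(c,F)=|\mathit{trans}(c)\setminus\mathit{trans}(c*F)|-|\mathit{trans}(c*F)\setminus\mathit{trans}(c)|$; $c$ is strongly maximal in $A$ if $\mathit{dtrans}(c,F)\ge0$ for all finite $F\subseteq A$ of vertices of finite degree. A partial coloring $c:D\to\{0,1\}$ with $V(K)\subseteq D\subseteq V(\hat G)$ is stable if there are $H_c\subseteq H$ and an antichain $X_c\subseteq H\cup S$ such that: (S1) $D\setminus V(K)$ is the disjoint union of $H_c$ and $\lfloor X_c\rfloor$; (S2) $c$, as a coloring of $\hat G[D]$, is strongly maximal in $\lfloor X_c\rfloor$; (S3) for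 every $w\in V(\hat G)\setminus D$ and every $v\in X_c$, the set $N(w)\cap\lfloor v\rfloor$ is finite. *)

theory Defs
  imports Main "HOL-Library.Countable_Set"
begin

text \<open>The graph G-hat lives on VG \<union> VK with edge relation Eh; G and K are its induced
  subgraphs on VG and VK (so the extra edges between V(G) and V(K) are arbitrary).\<close>

definition induced :: "('a \<Rightarrow> 'a \<Rightarrow> bool) \<Rightarrow> 'a set \<Rightarrow> 'a \<Rightarrow> 'a \<Rightarrow> bool" where
  "induced E V u v \<longleftrightarrow> E u v \<and> u \<in> V \<and> v \<in> V"

definition simple_graph :: "'a set \<Rightarrow> ('a \<Rightarrow> 'a \<Rightarrow> bool) \<Rightarrow> bool" where
  "simple_graph V E \<longleftrightarrow> (\<forall>u v. E u v \<longrightarrow> u \<in> V \<and> v \<in> V \<and> u \<noteq> v \<and> E v u)"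

definition is_path :: "('a \<Rightarrow> 'a \<Rightarrow> bool) \<Rightarrow> 'a list \<Rightarrow> bool" where
  "is_path E p \<longleftrightarrow> p \<noteq> [] \<and> distinct p \<and> (\<forall>i. Suc i < length p \<longrightarrow> E (p ! i) (p ! Suc i))"

definition connected_graph :: "'a set \<Rightarrow> ('a \<Rightarrow> 'a \<Rightarrow> bool) \<Rightarrow> bool" where
  "connected_graph V E \<longleftrightarrow> V \<noteq> {} \<and>
     (\<forall>u\<in>V. \<forall>v\<in>V. \<exists>p. is_path E p \<and> set p \<subseteq> V \<and> hd p = u \<and> last p = v)"

definition acyclic_graph :: "('a \<Rightarrow> 'a \<Rightarrow> bool) \<Rightarrow> bool" where
  "acyclic_graph E \<longleftrightarrow> \<not> (\<exists>p. is_path E p \<and> 3 \<le> length p \<and> E (last p) (hd p))"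

definition spanning_tree :: "'a set \<Rightarrow> ('a \<Rightarrow> 'a \<Rightarrow> bool) \<Rightarrow> ('a \<Rightarrow> 'a \<Rightarrow> bool) \<Rightarrow> bool" where
  "spanning_tree V E T \<longleftrightarrow> simple_graph V T \<and> (\<forall>u v. T u v \<longrightarrow> E u v)
     \<and> connected_graph V T \<and> acyclic_graph T"

definition tree_le :: "('a \<Rightarrow> 'a \<Rightarrow> bool) \<Rightarrow> 'a \<Rightarrow> 'a \<Rightarrow> 'a \<Rightarrow> bool" where
  "tree_le T r u v \<longleftrightarrow> (\<exists>p. is_path T p \<and> hd p = r \<and> last p = v \<and> u \<in> set p)"

definition normal_spanning_tree ::
  "'a set \<Rightarrow> ('a \<Rightarrow> 'a \<Rightarrow> bool) \<Rightarrow> ('a \<Rightarrow> 'a \<Rightarrow> bool) \<Rightarrow> 'a \<Rightarrow> bool" where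
  "normal_spanning_tree V E T r \<longleftrightarrow> r \<in> V \<and> spanning_tree V E T \<and>
     (\<forall>u v. E u v \<longrightarrow> tree_le T r u v \<or> tree_le T r v u)"

definition fin_deg :: "('a \<Rightarrow> 'a \<Rightarrow> bool) \<Rightarrow> 'a \<Rightarrow> bool" where
  "fin_deg E v \<longleftrightarrow> finite {u. E v u}"

definition is_ray :: "'a set \<Rightarrow> ('a \<Rightarrow> 'a \<Rightarrow> bool) \<Rightarrow> (nat \<Rightarrow> 'a) \<Rightarrow> bool" where
  "is_ray V E f \<longleftrightarrow> inj f \<and> range f \<subseteq> V \<and> (\<forall>n. E (f n) (f (Suc n)))"

definition alternating_ray :: "'a set \<Rightarrow> ('a \<Rightarrow> 'a \<Rightarrow> bool) \<Rightarrow> (nat \<Rightarrow> 'a) \<Rightarrow> bool" where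
  "alternating_ray V E f \<longleftrightarrow> is_ray V E f \<and>
     infinite {v \<in> range f. fin_deg E v} \<and> infinite {v \<in> range f. \<not> fin_deg E v}"

text \<open>up-closure \<lfloor>v\<rfloor> = {u. u \<ge> v} and \<lfloor>X\<rfloor>.\<close>
definition up :: "'a set \<Rightarrow> ('a \<Rightarrow> 'a \<Rightarrow> bool) \<Rightarrow> 'a \<Rightarrow> 'a \<Rightarrow> 'a set" where
  "up V T r v = {u \<in> V. tree_le T r v u}"

definition upset :: "'a set \<Rightarrow> ('a \<Rightarrow> 'a \<Rightarrow> bool) \<Rightarrow> 'a \<Rightarrow> 'a set \<Rightarrow> 'a set" where
  "upset V T r X = (\<Union>v\<in>X. up V T r v)"

definition antichain :: "('a \<Rightarrow> 'a \<Rightarrow> bool) \<Rightarrow> 'a \<Rightarrow> 'a set \<Rightarrow> bool" where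
  "antichain T r X \<longleftrightarrow> (\<forall>x\<in>X. \<forall>y\<in>X. tree_le T r x y \<longrightarrow> x = y)"

definition Smin :: "'a set \<Rightarrow> ('a \<Rightarrow> 'a \<Rightarrow> bool) \<Rightarrow> ('a \<Rightarrow> 'a \<Rightarrow> bool) \<Rightarrow> 'a \<Rightarrow> 'a set" where
  "Smin V E T r = {v \<in> V. fin_deg E v \<and>
      (\<forall>u\<in>V. tree_le T r u v \<and> u \<noteq> v \<longrightarrow> \<not> fin_deg E u)}"

definition Hset :: "'a set \<Rightarrow> ('a \<Rightarrow> 'a \<Rightarrow> bool) \<Rightarrow> ('a \<Rightarrow> 'a \<Rightarrow> bool) \<Rightarrow> 'a \<Rightarrow> 'a set" where
  "Hset V E T r = V - upset V T r (Smin V E T r)"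

text \<open>Colourings: c :: 'a \<Rightarrow> bool, considered on the domain D (colours 0/1 = False/True).
  Edges of the induced graph Eh[D] are unordered pairs {u,v}.\<close>
definition trans_edges :: "('a \<Rightarrow> 'a \<Rightarrow> bool) \<Rightarrow> 'a set \<Rightarrow> ('a \<Rightarrow> bool) \<Rightarrow> 'a set set" where
  "trans_edges E D c = {{u, v} | u v. u \<in> D \<and> v \<in> D \<and> E u v \<and> c u \<noteq> c v}"

definition flip :: "('a \<Rightarrow> bool) \<Rightarrow> 'a set \<Rightarrow> 'a \<Rightarrow> bool" where
  "flip c F = (\<lambda>x. if x \<in> F then \<not> c x else c x)"

definition dtrans :: "('a \<Rightarrow> 'a \<Rightarrow> bool) \<Rightarrow> 'a set \<Rightarrow> ('a \<Rightarrow> bool) \<Rightarrow> 'a set \<Rightarrow> int" where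
  "dtrans E D c F =
     int (card (trans_edges E D c - trans_edges E D (flip c F)))
     - int (card (trans_edges E D (flip c F) - trans_edges E D c))"

definition strongly_maximal ::
  "('a \<Rightarrow> 'a \<Rightarrow> bool) \<Rightarrow> ('a \<Rightarrow> 'a \<Rightarrow> bool) \<Rightarrow> 'a set \<Rightarrow> ('a \<Rightarrow> bool) \<Rightarrow> 'a set \<Rightarrow> bool" where
  "strongly_maximal E Edeg D c A \<longleftrightarrow>
     (\<forall>F. finite F \<longrightarrow> F \<subseteq> A \<longrightarrow> (\<forall>v\<in>F. fin_deg Edeg v) \<longrightarrow> 0 \<le> dtrans E D c F)"

definition stable_wit ::
  "'a set \<Rightarrow> 'a set \<Rightarrow> ('a \<Rightarrow> 'a \<Rightarrow> bool) \<Rightarrow> ('a \<Rightarrow> 'a \<Rightarrow> bool) \<Rightarrow> 'a \<Rightarrow>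
   'a set \<Rightarrow> ('a \<Rightarrow> bool) \<Rightarrow> 'a set \<Rightarrow> 'a set \<Rightarrow> bool" where
  "stable_wit VG VK Eh T r D c Hc Xc \<longleftrightarrow>
     VK \<subseteq> D \<and> D \<subseteq> VG \<union> VK \<and>
     Hc \<subseteq> Hset VG (induced Eh VG) T r \<and>
     Xc \<subseteq> Hset VG (induced Eh VG) T r \<union> Smin VG (induced Eh VG) T r \<and>
     antichain T r Xc \<and>
     D - VK = Hc \<union> upset VG T r Xc \<and> Hc \<inter> upset VG T r Xc = {} \<and>
     strongly_maximal Eh (induced Eh VG) D c (upset VG T r Xc) \<and>
     (\<forall>w \<in> (VG \<union> VK) - D. \<forall>v\<in>Xc. finite ({u. Eh w u} \<inter> up VG T r v))"

end

theory Submission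
  imports Defs
begin

text \<open>For \<open>v \<in> X\<^sub>c\<close> the sets \<open>\<lfloor>v\<rfloor>\<close> are pairwise disjoint and, \<open>T\<close> being normal and \<open>X\<^sub>c\<close> an
  antichain, no edge joins two of them; so flips inside different \<open>\<lfloor>v\<rfloor>\<close> do not interact and
  \<open>c'\<close> can be repaired block by block. An edge from \<open>D' - D\<close> into \<open>\<lfloor>v\<rfloor>\<close> starts below \<open>v\<close>;
  there are finitely many such vertices, each with finitely many neighbours in \<open>\<lfloor>v\<rfloor>\<close> by (S3).
  As \<open>c\<close> is strongly maximal in \<open>\<lfloor>v\<rfloor>\<close>, a finite flip inside \<open>\<lfloor>v\<rfloor>\<close> can therefore gain at most
  that many transitions for \<open>c'\<close>, so there is a flip of maximal gain. Performing one in every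
  block gives the required colouring: by maximality no further flip inside a block is
  profitable, and any finite flip splits into flips inside single blocks.\<close>

subsection \<open>Paths in a tree\<close>

lemma is_path_iff_successively: "is_path T p \<longleftrightarrow> p \<noteq> [] \<and> distinct p \<and> successively T p"
  unfolding is_path_def successively_conv_nth by blast

lemma is_path_prefix:
  assumes "is_path T (ys @ x # zs)"
  shows "is_path T (ys @ [x])" "hd (ys @ [x]) = hd (ys @ x # zs)"
  using assms unfolding is_path_iff_successively
  by (auto simp: successively_append_iff successively_Cons hd_append)

lemma acyclic_no_paths_from_distinct_neighbours:
  assumes symT: "\<And>x y. T x y \<Longrightarrow> T y x" and acy: "acyclic_graph T"
    and "is_path T p" "is_path T q" "last p = last q" "a \<notin> set p" "a \<notin> set q"
    and "T a (hd p)" "T a (hd q)" "hd p \<noteq> hd q"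
  shows False
  using assms(3-)
proof (induction "length p + length q" arbitrary: p q rule: less_induct)
  case less
  obtain p0 z where p: "p = p0 @ [z]" using less.prems(1) unfolding is_path_def
    by (metis rev_exhaust)
  obtain q0 where q: "q = q0 @ [z]" using less.prems(2,3) p unfolding is_path_def
    by (metis last_snoc rev_exhaust)
  have sp: "successively T (p0 @ [z])" "distinct (p0 @ [z])"
    using less.prems(1) p unfolding is_path_iff_successively by auto
  have sq: "successively T (q0 @ [z])" "distinct (q0 @ [z])"
    using less.prems(2) q unfolding is_path_iff_successively by auto
  show False
  proof (cases "set p0 \<inter> set q0 = {}")
    case True
    \<comment> \<open>then \<open>a, p, reversed q0\<close> is a cycle\<close>
    define cyc where "cyc = a # (p0 @ [z]) @ rev q0"
    have "successively (\<lambda>x y. T y x) (q0 @ [z])"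
      using sq(1) by (rule successively_mono) (simp add: symT)
    then have "successively T (z # rev q0)"
      by (metis rev.simps(2) rev_rev_ident successively_rev)
    then have "successively T ((p0 @ [z]) @ rev q0)"
      using sp(1) by (cases "rev q0") (auto simp: successively_append_iff)
    then have "successively T cyc"
      unfolding cyc_def using less.prems(6) p by (cases p0) (simp_all add: successively_Cons)
    moreover have "distinct cyc"
      unfolding cyc_def using True sp(2) sq(2) less.prems(4,5) p q by auto
    moreover have "3 \<le> length cyc"
      using less.prems(8) unfolding cyc_def p q by (cases p0; cases q0; simp)
    moreover have "T (last cyc) (hd cyc)"
      using less.prems(7) symT unfolding cyc_def q by (cases q0; simp add: last_rev)
    ultimately show False
      using acy unfolding acyclic_graph_def is_path_iff_successively cyc_def by blast
  next
    case False
    \<comment> \<open>cut both paths at a common vertex and recurse on the shorter pair\<close>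
    then obtain x where x: "x \<in> set p0" "x \<in> set q0" by blast
    obtain p2 p3 where p0: "p0 = p2 @ x # p3" using x split_list by metis
    obtain q2 q3 where q0: "q0 = q2 @ x # q3" using x split_list by metis
    show False
    proof (rule less.hyps[of "p2 @ [x]" "q2 @ [x]"])
      show "is_path T (p2 @ [x])" "is_path T (q2 @ [x])"
        using is_path_prefix less.prems(1,2) unfolding p q p0 q0 by (metis append.assoc append_Cons)+
      have "hd (p2 @ [x]) = hd p" "hd (q2 @ [x]) = hd q"
        unfolding p q p0 q0 by (cases p2; simp; cases q2; simp)+
      then show "T a (hd (p2 @ [x]))" "T a (hd (q2 @ [x]))" "hd (p2 @ [x]) \<noteq> hd (q2 @ [x])"
        using less.prems(6-8) by simp_all
    qed (use less.prems(4,5) in \<open>auto simp: p q p0 q0\<close>)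
  qed
qed

lemma acyclic_path_unique:
  assumes symT: "\<And>x y. T x y \<Longrightarrow> T y x" and acy: "acyclic_graph T"
  shows "is_path T p \<Longrightarrow> is_path T q \<Longrightarrow> hd p = hd q \<Longrightarrow> last p = last q \<Longrightarrow> p = q"
proof (induction p arbitrary: q)
  case Nil
  then show ?case by (simp add: is_path_def)
next
  case (Cons a p')
  obtain q' where q: "q = a # q'" using Cons.prems(2,3) unfolding is_path_def by (cases q) auto
  show ?case
  proof (cases "p' = []")
    case True
    then have "last q = a" using Cons.prems(4) by simp
    then have "q' = []" using Cons.prems(2) q unfolding is_path_def
      by (metis distinct.simps(2) last_ConsR last_in_set)
    then show ?thesis using True q by simp
  next
    case False
    have q'ne: "q' \<noteq> []"
    proof
      assume "q' = []"
      then have "last p' = a" using Cons.prems(4) q False by simp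
      then show False using Cons.prems(1) False unfolding is_path_def
        by (metis distinct.simps(2) last_in_set)
    qed
    have p': "is_path T p'" "T a (hd p')" "a \<notin> set p'"
      using Cons.prems(1) False unfolding is_path_iff_successively
      by (auto simp: successively_Cons)
    have q': "is_path T q'" "T a (hd q')" "a \<notin> set q'"
      using Cons.prems(2) q'ne q unfolding is_path_iff_successively
      by (auto simp: successively_Cons)
    have "last p' = last q'" using Cons.prems(4) q q'ne False by simp
    then have "hd p' = hd q'"
      using acyclic_no_paths_from_distinct_neighbours[OF symT acy p'(1) q'(1)] p' q' by blast
    then show ?thesis using Cons.IH[OF p'(1) q'(1)] \<open>last p' = last q'\<close> q by simp
  qed
qed

context
  fixes T :: "'a \<Rightarrow> 'a \<Rightarrow> bool" and r :: 'a
  assumes symT: "\<And>x y. T x y \<Longrightarrow> T y x" and acy: "acyclic_graph T"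
begin

lemma tree_le_trans: "tree_le T r u v \<Longrightarrow> tree_le T r v w \<Longrightarrow> tree_le T r u w"
proof -
  assume "tree_le T r u v" "tree_le T r v w"
  then obtain p q where p: "is_path T p" "hd p = r" "last p = v" "u \<in> set p"
    and q: "is_path T q" "hd q = r" "last q = w" "v \<in> set q"
    unfolding tree_le_def by blast
  obtain q2 q3 where qs: "q = q2 @ v # q3" using q(4) split_list by metis
  have "q2 @ [v] = p"
    using acyclic_path_unique[OF symT acy] is_path_prefix[of T q2 v q3] p q qs by simp
  then show ?thesis using p(4) q qs unfolding tree_le_def by auto
qed

lemma tree_le_linear_below:
  assumes "tree_le T r u w" "tree_le T r v w"
  shows "tree_le T r u v \<or> tree_le T r v u"
proof -
  obtain p q where p: "is_path T p" "hd p = r" "last p = w" "u \<in> set p"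
    and q: "is_path T q" "hd q = r" "last q = w" "v \<in> set q"
    using assms unfolding tree_le_def by blast
  have "p = q" using acyclic_path_unique[OF symT acy p(1) q(1)] p q by simp
  obtain p2 p3 where ps: "p = p2 @ u # p3" using p(4) split_list by metis
  show ?thesis
  proof (cases "v \<in> set (p2 @ [u])")
    case True
    have "is_path T (p2 @ [u])" "hd (p2 @ [u]) = r" "last (p2 @ [u]) = u"
      using is_path_prefix[of T p2 u p3] p ps by auto
    then show ?thesis using True unfolding tree_le_def by blast
  next
    case False
    then have "v \<in> set p3" using q(4) \<open>p = q\<close> ps by auto
    then obtain p4 p5 where p3: "p3 = p4 @ v # p5" using split_list by metis
    let ?p = "(p2 @ u # p4) @ [v]"
    have "is_path T ?p" "hd ?p = r"
      using is_path_prefix[of T "p2 @ u # p4" v p5] p ps p3 by auto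
    moreover have "last ?p = v" "u \<in> set ?p" by simp_all
    ultimately show ?thesis unfolding tree_le_def by blast
  qed
qed

lemma finite_tree_le_below: "finite {u. tree_le T r u v}"
proof (cases "\<exists>p. is_path T p \<and> hd p = r \<and> last p = v")
  case True
  then obtain p where p: "is_path T p" "hd p = r" "last p = v" by blast
  have "{u. tree_le T r u v} \<subseteq> set p"
  proof
    fix u assume "u \<in> {u. tree_le T r u v}"
    then obtain q where q: "is_path T q" "hd q = r" "last q = v" "u \<in> set q"
      unfolding tree_le_def by blast
    then have "q = p" using acyclic_path_unique[OF symT acy q(1) p(1)] p by simp
    then show "u \<in> set p" using q by simp
  qed
  then show ?thesis using finite_subset by blast
next
  case False
  then have "{u. tree_le T r u v} = {}" unfolding tree_le_def by blast
  then show ?thesis by simp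
qed

lemma up_disjoint:
  assumes "antichain T r X" "v \<in> X" "w \<in> X" "v \<noteq> w"
  shows "up V T r v \<inter> up V T r w = {}"
  using assms tree_le_linear_below unfolding antichain_def up_def by blast

context
  fixes V :: "'a set" and E :: "'a \<Rightarrow> 'a \<Rightarrow> bool"
  assumes normal: "\<And>u w. E u w \<Longrightarrow> u \<in> V \<Longrightarrow> w \<in> V \<Longrightarrow> tree_le T r u w \<or> tree_le T r w u"
begin

lemma no_edge_between_ups:
  assumes "antichain T r X" "v \<in> X" "w \<in> X" "v \<noteq> w"
    and "x \<in> up V T r v" "y \<in> up V T r w"
  shows "\<not> E x y"
proof
  assume "E x y"
  then have "tree_le T r x y \<or> tree_le T r y x" using normal assms(5,6) unfolding up_def by blast
  then have "x \<in> up V T r w \<or> y \<in> up V T r v"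
    using tree_le_trans assms(5,6) unfolding up_def by blast
  then show False using up_disjoint[OF assms(1-4)] assms(5,6) by blast
qed

lemma tree_le_of_edge_into_up:
  assumes "E w u" "w \<in> V" "w \<notin> up V T r v" "u \<in> up V T r v"
  shows "tree_le T r w v"
proof -
  have "tree_le T r v u" "u \<in> V" using assms(4) unfolding up_def by auto
  moreover have "\<not> tree_le T r v w" using assms(2,3) unfolding up_def by simp
  ultimately have "tree_le T r w u" using normal[OF assms(1,2)] tree_le_trans by blast
  then show ?thesis
    using tree_le_linear_below \<open>tree_le T r v u\<close> \<open>\<not> tree_le T r v w\<close> by blast
qed

lemma finite_edges_into_up:
  assumes "W \<subseteq> V - up V T r v" "\<And>w. w \<in> W \<Longrightarrow> finite ({u. E w u} \<inter> up V T r v)"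
  shows "finite {{w, u} | w u. w \<in> W \<and> u \<in> up V T r v \<and> E w u}"
proof -
  let ?W = "{w \<in> W. \<exists>u \<in> up V T r v. E w u}"
  have "?W \<subseteq> {w. tree_le T r w v}"
    using tree_le_of_edge_into_up assms(1) by blast
  then have "finite ?W" using finite_tree_le_below finite_subset by blast
  moreover have "{{w, u} | w u. w \<in> W \<and> u \<in> up V T r v \<and> E w u}
      = (\<lambda>(w, u). {w, u}) ` (SIGMA w:?W. {u. E w u} \<inter> up V T r v)"
    by auto
  moreover have "finite (SIGMA w:?W. {u. E w u} \<inter> up V T r v)"
    using \<open>finite ?W\<close> assms(2) by auto
  ultimately show ?thesis by simp
qed

end

end

subsection \<open>Counting transitions\<close>

definition incident_edges :: "('a \<Rightarrow> 'a \<Rightarrow> bool) \<Rightarrow> 'a set \<Rightarrow> 'a set set" where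
  "incident_edges E F = {{x, y} | x y. x \<in> F \<and> E x y}"

definition surplus :: "'b set \<Rightarrow> 'b set \<Rightarrow> int" where
  "surplus A B = int (card (A - B)) - int (card (B - A))"

lemma dtrans_eq_surplus: "dtrans E D c F = surplus (trans_edges E D c) (trans_edges E D (flip c F))"
  unfolding dtrans_def surplus_def by simp

lemma finite_incident_edges:
  assumes "finite F" "\<And>x. x \<in> F \<Longrightarrow> finite {y. E x y}"
  shows "finite (incident_edges E F)"
proof -
  have "incident_edges E F = (\<lambda>(x, y). {x, y}) ` (SIGMA x:F. {y. E x y})"
    unfolding incident_edges_def by auto
  then show ?thesis using assms by simp
qed

lemma incident_edges_mono: "F \<subseteq> G \<Longrightarrow> incident_edges E F \<subseteq> incident_edges E G"
  unfolding incident_edges_def by blast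

lemma doubleton_in_trans_edges_iff:
  assumes symE: "\<And>x y. E x y \<Longrightarrow> E y x"
  shows "{u, v} \<in> trans_edges E D c \<longleftrightarrow> u \<in> D \<and> v \<in> D \<and> E u v \<and> c u \<noteq> c v"
  unfolding trans_edges_def using symE by (auto simp: doubleton_eq_iff)

lemma trans_edges_diff_subset_incident:
  assumes symE: "\<And>x y. E x y \<Longrightarrow> E y x" and agree: "\<And>x. x \<notin> F \<Longrightarrow> c1 x = c2 x"
  shows "trans_edges E D c1 - trans_edges E D c2 \<subseteq> incident_edges E F"
proof
  fix e assume e: "e \<in> trans_edges E D c1 - trans_edges E D c2"
  then obtain u v where uv: "e = {u, v}" "u \<in> D" "v \<in> D" "E u v" "c1 u \<noteq> c1 v"
    unfolding trans_edges_def by blast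
  have "u \<in> F \<or> v \<in> F"
    using e uv agree unfolding trans_edges_def by fastforce
  then show "e \<in> incident_edges E F"
    unfolding incident_edges_def using uv symE by (auto simp: insert_commute)
qed

lemma trans_edges_flip_diff_subset:
  assumes "\<And>x y. E x y \<Longrightarrow> E y x"
  shows "trans_edges E D c - trans_edges E D (flip c F) \<subseteq> incident_edges E F"
    and "trans_edges E D (flip c F) - trans_edges E D c \<subseteq> incident_edges E F"
  by (rule trans_edges_diff_subset_incident[OF assms]; simp add: flip_def)+

lemma surplus_restrict:
  assumes "A - B \<subseteq> M" "B - A \<subseteq> M"
  shows "surplus A B = surplus (A \<inter> M) (B \<inter> M)"
proof -
  have "A - B = (A \<inter> M) - (B \<inter> M)" "B - A = (B \<inter> M) - (A \<inter> M)" using assms by blast+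
  then show ?thesis unfolding surplus_def by simp
qed

lemma surplus_eq_card_inter:
  assumes "finite M" "A - B \<subseteq> M" "B - A \<subseteq> M"
  shows "surplus A B = int (card (A \<inter> M)) - int (card (B \<inter> M))"
proof -
  have fin: "finite (A - B)" "finite (B - A)" "finite (A \<inter> B \<inter> M)"
    using assms finite_subset by auto
  have a: "A \<inter> M = (A - B) \<union> (A \<inter> B \<inter> M)" and b: "B \<inter> M = (B - A) \<union> (A \<inter> B \<inter> M)"
    using assms by blast+
  have "card (A \<inter> M) = card (A - B) + card (A \<inter> B \<inter> M)"
    unfolding a using fin by (subst card_Un_disjoint) auto
  moreover have "card (B \<inter> M) = card (B - A) + card (A \<inter> B \<inter> M)"
    unfolding b using fin by (subst card_Un_disjoint) auto
  ultimately show ?thesis unfolding surplus_def by simp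
qed

lemma surplus_add:
  assumes "finite (A - B)" "finite (B - A)" "finite (B - C)" "finite (C - B)"
  shows "surplus A B + surplus B C = surplus A C"
proof -
  define M where "M = (A - B) \<union> (B - A) \<union> (B - C) \<union> (C - B)"
  have "finite M" unfolding M_def using assms by simp
  moreover have "A - B \<subseteq> M" "B - A \<subseteq> M" "B - C \<subseteq> M" "C - B \<subseteq> M" "A - C \<subseteq> M" "C - A \<subseteq> M"
    unfolding M_def by blast+
  ultimately show ?thesis by (simp add: surplus_eq_card_inter)
qed

lemma flip_empty [simp]: "flip c {} = c"
  unfolding flip_def by simp

lemma flip_flip: "flip (flip c F) G = flip c (sym_diff F G)"
  unfolding flip_def by auto

lemma dtrans_empty [simp]: "dtrans E D c {} = 0"
  unfolding dtrans_def by simp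

lemma dtrans_flip_flip:
  assumes symE: "\<And>x y. E x y \<Longrightarrow> E y x"
    and "finite (incident_edges E F)" "finite (incident_edges E G)"
  shows "dtrans E D c F + dtrans E D (flip c F) G = dtrans E D c (sym_diff F G)"
proof -
  have "surplus (trans_edges E D c) (trans_edges E D (flip c F))
      + surplus (trans_edges E D (flip c F)) (trans_edges E D (flip (flip c F) G))
      = surplus (trans_edges E D c) (trans_edges E D (flip (flip c F) G))"
    using trans_edges_flip_diff_subset[where E=E, OF symE, where D=D and c=c and F=F]
      trans_edges_flip_diff_subset[where E=E, OF symE, where D=D and c="flip c F" and F=G] assms(2,3)
    by (intro surplus_add) (rule finite_subset; assumption)+
  then show ?thesis unfolding dtrans_eq_surplus flip_flip .
qed

lemma dtrans_cong:
  assumes symE: "\<And>x y. E x y \<Longrightarrow> E y x"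
    and agree: "\<And>z. z \<in> F \<or> (\<exists>x\<in>F. E x z) \<Longrightarrow> c1 z = c2 z"
  shows "dtrans E D c1 F = dtrans E D c2 F"
proof -
  let ?N = "incident_edges E F"
  have restrict: "trans_edges E D d1 \<inter> ?N = trans_edges E D d2 \<inter> ?N"
    if d_agree: "\<And>z. z \<in> F \<or> (\<exists>x\<in>F. E x z) \<Longrightarrow> d1 z = d2 z" for d1 d2
  proof -
    have "e \<in> trans_edges E D d1 \<longleftrightarrow> e \<in> trans_edges E D d2" if "e \<in> ?N" for e
    proof -
      obtain x y where xy: "e = {x, y}" "x \<in> F" "E x y"
        using \<open>e \<in> ?N\<close> unfolding incident_edges_def by blast
      then have "d1 x = d2 x" "d1 y = d2 y" using d_agree by blast+
      then show ?thesis unfolding xy(1) using doubleton_in_trans_edges_iff[where E=E, OF symE] by simp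
    qed
    then show ?thesis by blast
  qed
  have "dtrans E D c F
      = surplus (trans_edges E D c \<inter> ?N) (trans_edges E D (flip c F) \<inter> ?N)" for c
    unfolding dtrans_eq_surplus by (rule surplus_restrict[OF trans_edges_flip_diff_subset[where E=E, OF symE]])
  moreover have "trans_edges E D c1 \<inter> ?N = trans_edges E D c2 \<inter> ?N"
    "trans_edges E D (flip c1 F) \<inter> ?N = trans_edges E D (flip c2 F) \<inter> ?N"
    using agree by (intro restrict; auto simp: flip_def)+
  ultimately show ?thesis by simp
qed

lemma dtrans_union_independent:
  assumes symE: "\<And>x y. E x y \<Longrightarrow> E y x"
    and "finite (incident_edges E F)" "finite (incident_edges E G)"
    and "F \<inter> G = {}" "\<And>x y. x \<in> G \<Longrightarrow> y \<in> F \<Longrightarrow> \<not> E x y"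
  shows "dtrans E D c (F \<union> G) = dtrans E D c F + dtrans E D c G"
proof -
  have "dtrans E D (flip c F) G = dtrans E D c G"
    using assms(4,5) by (intro dtrans_cong[OF symE]) (auto simp: flip_def)
  moreover have "(F - G) \<union> (G - F) = F \<union> G" using assms(4) by blast
  ultimately show ?thesis using dtrans_flip_flip[OF assms(1-3), where D=D and c=c] by simp
qed

text \<open>After the flip, the only transitions at \<open>F\<close> that are new in \<open>D'\<close> lie on edges from \<open>D' - D\<close>.\<close>

lemma dtrans_extension_ge:
  assumes symE: "\<And>x y. E x y \<Longrightarrow> E y x" and fin: "finite (incident_edges E F)"
    and "F \<subseteq> D" "D \<subseteq> D'" and ext: "\<forall>x\<in>D. c' x = c x"
    and "finite M" "{{w, u} | w u. w \<in> D' - D \<and> u \<in> F \<and> E w u} \<subseteq> M"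
  shows "dtrans E D c F - int (card M) \<le> dtrans E D' c' F"
proof -
  let ?N = "incident_edges E F"
  have eq: "dtrans E X d F
      = int (card (trans_edges E X d \<inter> ?N)) - int (card (trans_edges E X (flip d F) \<inter> ?N))"
    for X d
    unfolding dtrans_eq_surplus
    by (rule surplus_eq_card_inter[OF fin trans_edges_flip_diff_subset[where E=E, OF symE]])
  have before: "trans_edges E D c \<inter> ?N \<subseteq> trans_edges E D' c' \<inter> ?N"
    using assms(4) ext unfolding trans_edges_def by fastforce
  have after: "trans_edges E D' (flip c' F) \<inter> ?N \<subseteq> (trans_edges E D (flip c F) \<inter> ?N) \<union> M"
  proof
    fix e assume e: "e \<in> trans_edges E D' (flip c' F) \<inter> ?N"
    then obtain x y where xy: "e = {x, y}" "x \<in> F" "E x y" unfolding incident_edges_def by blast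
    then have m: "x \<in> D'" "y \<in> D'" "flip c' F x \<noteq> flip c' F y"
      using e doubleton_in_trans_edges_iff[where E=E, OF symE] by auto
    show "e \<in> (trans_edges E D (flip c F) \<inter> ?N) \<union> M"
    proof (cases "y \<in> D")
      case True
      then have "flip c F x \<noteq> flip c F y" using m assms(3) xy ext unfolding flip_def by auto
      then show ?thesis
        using e True assms(3) xy doubleton_in_trans_edges_iff[where E=E, OF symE] by auto
    next
      case False
      then have "e \<in> {{w, u} | w u. w \<in> D' - D \<and> u \<in> F \<and> E w u}"
        using m xy symE by (auto simp: insert_commute)
      then show ?thesis using assms(7) by blast
    qed
  qed
  have "card (trans_edges E D c \<inter> ?N) \<le> card (trans_edges E D' c' \<inter> ?N)"
    using fin before by (simp add: card_mono)
  moreover have "card (trans_edges E D' (flip c' F) \<inter> ?N)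
      \<le> card (trans_edges E D (flip c F) \<inter> ?N) + card M"
    using card_mono[OF _ after] card_Un_le fin \<open>finite M\<close> by (meson finite_Int finite_UnI le_trans)
  ultimately show ?thesis unfolding eq by linarith
qed

subsection \<open>Repairing a colouring block by block\<close>

definition admissible_flips :: "('a \<Rightarrow> 'a \<Rightarrow> bool) \<Rightarrow> 'a set \<Rightarrow> 'a set set" where
  "admissible_flips Edeg A = {F. finite F \<and> F \<subseteq> A \<and> (\<forall>x\<in>F. fin_deg Edeg x)}"

definition separated_family :: "('a \<Rightarrow> 'a \<Rightarrow> bool) \<Rightarrow> 'i set \<Rightarrow> ('i \<Rightarrow> 'a set) \<Rightarrow> bool" where
  "separated_family E X B \<longleftrightarrow>
     (\<forall>v\<in>X. \<forall>w\<in>X. v \<noteq> w \<longrightarrow> B v \<inter> B w = {} \<and> (\<forall>x\<in>B v. \<forall>y\<in>B w. \<not> E x y))"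

lemma strongly_maximal_iff_admissible:
  "strongly_maximal E Edeg D c A \<longleftrightarrow> (\<forall>F\<in>admissible_flips Edeg A. 0 \<le> dtrans E D c F)"
  unfolding strongly_maximal_def admissible_flips_def by blast

lemma strongly_maximal_subset:
  "strongly_maximal E Edeg D c B \<Longrightarrow> A \<subseteq> B \<Longrightarrow> strongly_maximal E Edeg D c A"
  unfolding strongly_maximal_def by blast

lemma ex_least_int_bounded_below:
  fixes f :: "'b \<Rightarrow> int"
  assumes "x0 \<in> S" "\<And>x. x \<in> S \<Longrightarrow> b \<le> f x"
  shows "\<exists>x\<in>S. \<forall>y\<in>S. f x \<le> f y"
proof -
  obtain x where x: "x \<in> S" "\<forall>y. y \<in> S \<longrightarrow> nat (f x - b) \<le> nat (f y - b)"
    using ex_has_least_nat[of "\<lambda>x. x \<in> S" x0 "\<lambda>x. nat (f x - b)"] assms(1) by blast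
  have "f x \<le> f y" if "y \<in> S" for y
  proof -
    have "nat (f x - b) \<le> nat (f y - b)" "0 \<le> f y - b" using x(2) that assms(2) by auto
    then have "f x - b \<le> f y - b" using nat_le_eq_zle by blast
    then show ?thesis by simp
  qed
  then show ?thesis using x(1) by blast
qed

lemma dtrans_nonneg_after_minimal_flip:
  assumes symE: "\<And>x y. E x y \<Longrightarrow> E y x"
    and "finite (incident_edges E F0)" "finite (incident_edges E F)"
    and "dtrans E D c F0 \<le> dtrans E D c (sym_diff F0 F)"
  shows "0 \<le> dtrans E D (flip c F0) F"
  using dtrans_flip_flip[where E=E, OF symE assms(2,3), where D=D and c=c] assms(4) by linarith

lemma dtrans_nonneg_blockwise:
  assumes symE: "\<And>x y. E x y \<Longrightarrow> E y x" and sep: "separated_family E X B"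
    and "finite F" "F \<subseteq> (\<Union>v\<in>X. B v)" "finite (incident_edges E F)"
    and "\<And>v. v \<in> X \<Longrightarrow> 0 \<le> dtrans E D c (F \<inter> B v)"
  shows "0 \<le> dtrans E D c F"
  using assms(3-)
proof (induction F rule: finite_psubset_induct)
  case (psubset F)
  show ?case
  proof (cases "F = {}")
    case True
    then show ?thesis by simp
  next
    case False
    then obtain v where v: "v \<in> X" "F \<inter> B v \<noteq> {}" using psubset.prems(1) by blast
    let ?G = "F - B v"
    have fin_G: "finite (incident_edges E ?G)"
      using psubset.prems(2) incident_edges_mono[of ?G F E] finite_subset by blast
    have fin_Fv: "finite (incident_edges E (F \<inter> B v))"
      using psubset.prems(2) incident_edges_mono[of "F \<inter> B v" F E] finite_subset by blast
    have "0 \<le> dtrans E D c ?G"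
    proof (rule psubset.IH)
      show "?G \<subset> F" "?G \<subseteq> (\<Union>v\<in>X. B v)" using v psubset.prems(1) by blast+
      show "finite (incident_edges E ?G)" by (fact fin_G)
      show "0 \<le> dtrans E D c (?G \<inter> B w)" if "w \<in> X" for w
      proof (cases "w = v")
        case True
        then have "?G \<inter> B w = {}" by blast
        then show ?thesis by simp
      next
        case False
        then have "?G \<inter> B w = F \<inter> B w" using sep v(1) that unfolding separated_family_def by blast
        then show ?thesis using psubset.prems(3) that by simp
      qed
    qed
    moreover have "dtrans E D c ((F \<inter> B v) \<union> ?G) = dtrans E D c (F \<inter> B v) + dtrans E D c ?G"
    proof (rule dtrans_union_independent[where E=E, OF symE fin_Fv fin_G])
      show "F \<inter> B v \<inter> ?G = {}" by blast
      show "\<not> E x y" if x: "x \<in> ?G" and y: "y \<in> F \<inter> B v" for x y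
      proof -
        obtain w where "w \<in> X" "x \<in> B w" using x psubset.prems(1) by blast
        moreover have "w \<noteq> v" using x \<open>x \<in> B w\<close> by blast
        ultimately show ?thesis using y sep v(1) unfolding separated_family_def by blast
      qed
    qed
    moreover have "(F \<inter> B v) \<union> ?G = F" by blast
    ultimately show ?thesis using psubset.prems(3)[OF v(1)] by simp
  qed
qed

text \<open>The witness flips, in each block, a finite set minimising \<open>dtrans\<close>.\<close>

lemma strongly_maximal_flip_on_blocks:
  fixes B :: "'i \<Rightarrow> 'a set"
  assumes symE: "\<And>x y. E x y \<Longrightarrow> E y x" and sep: "separated_family E X B"
    and locfin: "\<And>x. x \<in> (\<Union>v\<in>X. B v) \<Longrightarrow> fin_deg Edeg x \<Longrightarrow> finite {y. E x y}"
    and bounded: "\<And>v. v \<in> X \<Longrightarrow> \<exists>b. \<forall>F\<in>admissible_flips Edeg (B v). b \<le> dtrans E D c F"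
  shows "\<exists>c'. strongly_maximal E Edeg D c' (\<Union>v\<in>X. B v) \<and> {x. c' x \<noteq> c x} \<subseteq> (\<Union>v\<in>X. B v) \<and>
    (\<forall>v\<in>X. {x \<in> B v. c' x \<noteq> c x} \<in> admissible_flips Edeg (B v) \<and>
      (strongly_maximal E Edeg D c (B v) \<longrightarrow> (\<forall>x\<in>B v. c' x = c x)))"
proof -
  let ?A = "\<lambda>v. admissible_flips Edeg (B v)"
  have fin_inc: "finite (incident_edges E F)" if "F \<in> admissible_flips Edeg (\<Union>v\<in>X. B v)" for F
    using that locfin unfolding admissible_flips_def by (intro finite_incident_edges) blast+
  have "\<exists>F\<in>?A v. (\<forall>G\<in>?A v. dtrans E D c F \<le> dtrans E D c G) \<and>
      (strongly_maximal E Edeg D c (B v) \<longrightarrow> F = {})" if v: "v \<in> X" for v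
  proof (cases "strongly_maximal E Edeg D c (B v)")
    case True
    then show ?thesis
      unfolding strongly_maximal_iff_admissible by (intro bexI[of _ "{}"]) (auto simp: admissible_flips_def)
  next
    case False
    obtain b where "\<forall>F\<in>?A v. b \<le> dtrans E D c F" using bounded[OF v] by blast
    then show ?thesis
      using False ex_least_int_bounded_below[of "{}" "?A v" b "dtrans E D c"]
      by (auto simp: admissible_flips_def)
  qed
  then obtain Fv where Fv: "\<And>v. v \<in> X \<Longrightarrow> Fv v \<in> ?A v"
      "\<And>v G. v \<in> X \<Longrightarrow> G \<in> ?A v \<Longrightarrow> dtrans E D c (Fv v) \<le> dtrans E D c G"
      "\<And>v. v \<in> X \<Longrightarrow> strongly_maximal E Edeg D c (B v) \<Longrightarrow> Fv v = {}"
    by metis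
  have Fv_sub: "Fv v \<subseteq> B v" if "v \<in> X" for v
    using Fv(1)[OF that] unfolding admissible_flips_def by blast
  define c' where "c' = flip c (\<Union>v\<in>X. Fv v)"
  have c'_block: "c' z = flip c (Fv v) z" if "v \<in> X" "\<forall>w\<in>X - {v}. z \<notin> B w" for v z
  proof -
    have "z \<in> (\<Union>v\<in>X. Fv v) \<longleftrightarrow> z \<in> Fv v" using that Fv_sub by blast
    then show ?thesis unfolding c'_def flip_def by simp
  qed
  have block_diff: "{x \<in> B v. c' x \<noteq> c x} = Fv v" if "v \<in> X" for v
    using c'_block[OF that] sep that Fv_sub unfolding separated_family_def flip_def by fastforce
  have in_block: "0 \<le> dtrans E D c' F" if "v \<in> X" "F \<in> ?A v" for v F
  proof -
    have "dtrans E D c' F = dtrans E D (flip c (Fv v)) F"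
    proof (rule dtrans_cong[where E=E, OF symE])
      fix z assume z: "z \<in> F \<or> (\<exists>x\<in>F. E x z)"
      have "F \<subseteq> B v" using that(2) unfolding admissible_flips_def by blast
      have "z \<notin> B w" if w: "w \<in> X - {v}" for w
      proof -
        have "B v \<inter> B w = {}" "\<forall>x\<in>B v. \<forall>y\<in>B w. \<not> E x y"
          using sep \<open>v \<in> X\<close> w unfolding separated_family_def by auto
        then show ?thesis using z \<open>F \<subseteq> B v\<close> by blast
      qed
      then show "c' z = flip c (Fv v) z" using c'_block[OF that(1)] by blast
    qed
    moreover have "sym_diff (Fv v) F \<in> ?A v"
      using Fv(1)[OF that(1)] that(2) unfolding admissible_flips_def by auto
    moreover have "?A v \<subseteq> admissible_flips Edeg (\<Union>v\<in>X. B v)"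
      using that(1) unfolding admissible_flips_def by blast
    ultimately show ?thesis
      using dtrans_nonneg_after_minimal_flip[where E=E, OF symE] fin_inc Fv(1,2) that by (metis subsetD)
  qed
  have "strongly_maximal E Edeg D c' (\<Union>v\<in>X. B v)"
    unfolding strongly_maximal_iff_admissible
  proof
    fix F assume F: "F \<in> admissible_flips Edeg (\<Union>v\<in>X. B v)"
    show "0 \<le> dtrans E D c' F"
    proof (rule dtrans_nonneg_blockwise[where E=E, OF symE sep])
      show "finite F" "F \<subseteq> (\<Union>v\<in>X. B v)" using F unfolding admissible_flips_def by blast+
      show "finite (incident_edges E F)" using fin_inc[OF F] .
      show "0 \<le> dtrans E D c' (F \<inter> B v)" if "v \<in> X" for v
        using in_block[OF that] F unfolding admissible_flips_def by blast
    qed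
  qed
  moreover have "{x. c' x \<noteq> c x} \<subseteq> (\<Union>v\<in>X. B v)"
    using Fv_sub unfolding c'_def flip_def by auto
  moreover have "{x \<in> B v. c' x \<noteq> c x} \<in> ?A v"
    "strongly_maximal E Edeg D c (B v) \<Longrightarrow> \<forall>x\<in>B v. c' x = c x" if "v \<in> X" for v
    using block_diff[OF that] Fv(1,3)[OF that] by auto
  ultimately show ?thesis by blast
qed

subsection \<open>Stable colourings\<close>

lemma normal_spanning_tree_props:
  assumes "normal_spanning_tree V (induced E V) T r"
  shows "\<And>x y. T x y \<Longrightarrow> T y x" "acyclic_graph T"
    "\<And>u w. E u w \<Longrightarrow> u \<in> V \<Longrightarrow> w \<in> V \<Longrightarrow> tree_le T r u w \<or> tree_le T r w u"
  using assms unfolding normal_spanning_tree_def spanning_tree_def simple_graph_def induced_def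
  by blast+

lemma separated_family_up:
  assumes "normal_spanning_tree V (induced E V) T r" "antichain T r X"
  shows "separated_family E X (up V T r)"
  using up_disjoint[where T=T and r=r, OF normal_spanning_tree_props(1,2)[OF assms(1)] assms(2)]
    no_edge_between_ups[where T=T and r=r and V=V and E=E,
      OF normal_spanning_tree_props[OF assms(1)] assms(2)]
  unfolding separated_family_def by blast

lemma finite_neighbours_if_fin_deg:
  assumes "simple_graph (V \<union> K) E" "finite K" "x \<in> V" "fin_deg (induced E V) x"
  shows "finite {y. E x y}"
proof -
  have "{y. E x y} \<subseteq> {y. induced E V x y} \<union> K"
    using assms(1,3) unfolding simple_graph_def induced_def by auto
  then show ?thesis using assms(2,4) unfolding fin_deg_def by (meson finite_Un finite_subset)
qed

text \<open>A flip inside \<open>\<lfloor>v\<rfloor>\<close> gains nothing for the strongly maximal \<open>c\<close>; for \<open>c'\<close> only the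
  edges in \<open>N\<close> can add to the gain.\<close>

lemma stable_flip_gain_bounded:
  assumes hatG: "simple_graph (VG \<union> VK) Eh" and finK: "finite VK"
    and nst: "normal_spanning_tree VG (induced Eh VG) T r"
    and stable: "stable_wit VG VK Eh T r D c Hc Xc"
    and DD': "D \<subseteq> D'" and D'H: "D' - D \<subseteq> Hset VG (induced Eh VG) T r"
    and ext: "\<forall>x\<in>D. c' x = c x" and v: "v \<in> Xc"
  defines "N \<equiv> {{w, u} | w u. w \<in> D' - D \<and> u \<in> up VG T r v \<and> Eh w u}"
  shows "finite N"
    and "F \<in> admissible_flips (induced Eh VG) (up VG T r v) \<Longrightarrow> - int (card N) \<le> dtrans Eh D' c' F"
proof -
  have symEh: "\<And>x y. Eh x y \<Longrightarrow> Eh y x" using hatG unfolding simple_graph_def by blast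
  have up_D: "up VG T r v \<subseteq> D" and S3: "\<forall>w \<in> (VG \<union> VK) - D. finite ({u. Eh w u} \<inter> up VG T r v)"
    using stable v unfolding stable_wit_def upset_def by blast+
  have "strongly_maximal Eh (induced Eh VG) D c (upset VG T r Xc)"
    using stable unfolding stable_wit_def by blast
  then have smax: "strongly_maximal Eh (induced Eh VG) D c (up VG T r v)"
    by (rule strongly_maximal_subset) (use v in \<open>auto simp: upset_def\<close>)
  have "D' - D \<subseteq> VG" using D'H unfolding Hset_def by blast
  then show fin_N: "finite N"
    unfolding N_def using up_D S3
    by (intro finite_edges_into_up[where T=T and r=r and V=VG and E=Eh,
          OF normal_spanning_tree_props[OF nst]]) auto
  assume F: "F \<in> admissible_flips (induced Eh VG) (up VG T r v)"
  then have c_nonneg: "0 \<le> dtrans Eh D c F"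
    using smax unfolding strongly_maximal_iff_admissible by blast
  have "finite (incident_edges Eh F)"
    using F finite_neighbours_if_fin_deg[OF hatG finK] unfolding admissible_flips_def up_def
    by (intro finite_incident_edges) auto
  moreover have "{{w, u} | w u. w \<in> D' - D \<and> u \<in> F \<and> Eh w u} \<subseteq> N"
    using F unfolding N_def admissible_flips_def by blast
  ultimately have "dtrans Eh D c F - int (card N) \<le> dtrans Eh D' c' F"
    using DD' ext fin_N F up_D unfolding admissible_flips_def
    by (intro dtrans_extension_ge[where E=Eh, OF symEh]) auto
  then show "- int (card N) \<le> dtrans Eh D' c' F" using c_nonneg by linarith
qed

theorem lemma3p5:
  fixes VG VK :: "'a set" and Eh T :: "'a \<Rightarrow> 'a \<Rightarrow> bool" and r :: 'a
    and D D' Hc Xc :: "'a set" and c c' :: "'a \<Rightarrow> bool"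
  assumes hatG: "simple_graph (VG \<union> VK) Eh"
    and disj: "VG \<inter> VK = {}"
    and finK: "finite VK"
    and countG: "countable VG"
    and connG: "connected_graph VG (induced Eh VG)"
    and noalt: "\<not> (\<exists>f. alternating_ray VG (induced Eh VG) f)"
    and nst: "normal_spanning_tree VG (induced Eh VG) T r"
    and stable: "stable_wit VG VK Eh T r D c Hc Xc"
    and DD': "D \<subseteq> D'"
    and D'H: "D' - D \<subseteq> Hset VG (induced Eh VG) T r"
    and ext: "\<forall>x\<in>D. c' x = c x"
  shows "\<exists>ct :: 'a \<Rightarrow> bool.
     strongly_maximal Eh (induced Eh VG) D' ct (upset VG T r Xc) \<and>
     {x \<in> D'. ct x \<noteq> c' x} \<subseteq> upset VG T r Xc \<and>
     (\<forall>v\<in>Xc. finite {x \<in> up VG T r v. ct x \<noteq> c' x} \<and>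
              (\<forall>x \<in> {x \<in> up VG T r v. ct x \<noteq> c' x}. fin_deg (induced Eh VG) x)) \<and>
     (\<forall>v\<in>Xc. \<not> (\<exists>w \<in> D' - D. \<exists>u \<in> up VG T r v. Eh w u) \<longrightarrow>
              (\<forall>x \<in> up VG T r v. ct x = c x))"
proof -
  let ?EG = "induced Eh VG" and ?up = "up VG T r"
  have symEh: "\<And>x y. Eh x y \<Longrightarrow> Eh y x" using hatG unfolding simple_graph_def by blast
  have antichain: "antichain T r Xc" and up_D: "\<And>v. v \<in> Xc \<Longrightarrow> ?up v \<subseteq> D"
    using stable unfolding stable_wit_def upset_def by blast+
  note gain = stable_flip_gain_bounded[OF hatG finK nst stable DD' D'H ext]
  have locfin: "finite {y. Eh x y}" if "x \<in> (\<Union>v\<in>Xc. ?up v)" "fin_deg ?EG x" for x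
    using finite_neighbours_if_fin_deg[OF hatG finK] that unfolding up_def by blast
  have bounded: "\<exists>b. \<forall>F\<in>admissible_flips ?EG (?up v). b \<le> dtrans Eh D' c' F" if "v \<in> Xc" for v
    using gain(2)[OF that] by blast
  obtain ct where ct: "strongly_maximal Eh ?EG D' ct (\<Union>v\<in>Xc. ?up v)"
    "{x. ct x \<noteq> c' x} \<subseteq> (\<Union>v\<in>Xc. ?up v)"
    "\<forall>v\<in>Xc. {x \<in> ?up v. ct x \<noteq> c' x} \<in> admissible_flips ?EG (?up v) \<and>
      (strongly_maximal Eh ?EG D' c' (?up v) \<longrightarrow> (\<forall>x\<in>?up v. ct x = c' x))"
    using strongly_maximal_flip_on_blocks[where E=Eh and X=Xc and B="?up" and Edeg="?EG" and D=D'
        and c=c', OF symEh separated_family_up[OF nst antichain] locfin bounded]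
    by blast
  have "\<forall>x\<in>?up v. ct x = c x" if v: "v \<in> Xc" and "\<not> (\<exists>w \<in> D' - D. \<exists>u \<in> ?up v. Eh w u)" for v
  proof -
    have no_new: "{{w, u} | w u. w \<in> D' - D \<and> u \<in> ?up v \<and> Eh w u} = {}" using that(2) by blast
    have "0 \<le> dtrans Eh D' c' F" if "F \<in> admissible_flips ?EG (?up v)" for F
      using gain(2)[OF v that] unfolding no_new by simp
    then have "strongly_maximal Eh ?EG D' c' (?up v)"
      unfolding strongly_maximal_iff_admissible by blast
    then show ?thesis using ct(3) v up_D[OF v] ext by auto
  qed
  then show ?thesis
    using ct(1-3) unfolding upset_def admissible_flips_def by blast
qed

end
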